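(* Let $A\in\mathbb{C}^{2n\times 2n}$ be Hamiltonian and let $f:\mathcal{M}\to\mathbb{R}_{\ge0}$, $f(Z)=\|\operatorname{diag}(Z^HAZ)\|_F^2=\sum_{j=1}^{2n}|\langle AZe_j,Ze_j\rangle|^2$, where $\mathcal{M}\subset\mathbb{C}^{2n\times 2n}$ is the manifold of unitary symplectic matrices. Then for every $Z\in\mathcal{M}$, $$\operatorname{grad} f(Z)=ZX$$ for some matrix $X\in\mathbb{C}^{2n\times 2n}$ which is skew-Hermitian and Hamiltonian and has zero diagonal.
   Context: $J=J_{2n}=\begin{bmatrix}0&I_n\\-I_n&0\end{bmatrix}$; $A$ is Hamiltonian if $(JA)^H=JA$; $Z$ is symplectic if $Z^HJZ=J$. $e_j$ is the $j$-th standard basis vector and $\langle u,v\rangle=v^Hu$. $\mathbb{C}^{2n\times 2n}$ is regarded as a real Euclidean space with inner product $\langle X,Y\rangle_{\mathbb{R}}=\operatorname{Re}\operatorname{tr}(X^HY)$. The function $\tilde f(Z)=\sum_j|\langle AZe_j,Ze_j\rangle|^2$ on all of $\mathbb{C}^{2n\times2n}$ is real-differentiable, with Euclidean gradient $\nabla\tilde f(Z)=\big[\partial\tilde f/\partial\operatorname{Re}z_{jk}+\imath\,\partial\tilde f/\partial\operatorname{Im}z_{jk}\big]_{j,k}$; $\operatorname{grad} f(Z)$ denotes the Riemannian gradient of the restriction $f=\tilde f|_{\mathcal{M}}$, i.e. the orthogonal projection (w.r.t. $\langle\cdot,\cdot\rangle_{\mathbb{R}}$) of $\nabla\tilde f(Z)$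 onto the tangent space $T_Z\mathcal{M}=\{ZK:\ K\text{ skew-Hermitian Hamiltonian}\}$. *)

theory Defs
  imports Complex_Main "Jordan_Normal_Form.Matrix"
begin

definition ctrans :: "complex mat \<Rightarrow> complex mat" where
  "ctrans X = mat (dim_col X) (dim_row X) (\<lambda>(i,j). cnj (X $$ (j,i)))"

definition Jmat :: "nat \<Rightarrow> complex mat" where
  "Jmat n = four_block_mat (0\<^sub>m n n) (1\<^sub>m n) (- 1\<^sub>m n) (0\<^sub>m n n)"

definition hamiltonian :: "nat \<Rightarrow> complex mat \<Rightarrow> bool" where
  "hamiltonian n A \<longleftrightarrow> A \<in> carrier_mat (2*n) (2*n) \<and>
     ctrans (Jmat n * A) = Jmat n * A"

definition symplectic :: "nat \<Rightarrow> complex mat \<Rightarrow> bool" where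
  "symplectic n Z \<longleftrightarrow> Z \<in> carrier_mat (2*n) (2*n) \<and>
     ctrans Z * Jmat n * Z = Jmat n"

definition unitary_mat :: "nat \<Rightarrow> complex mat \<Rightarrow> bool" where
  "unitary_mat m Z \<longleftrightarrow> Z \<in> carrier_mat m m \<and> ctrans Z * Z = 1\<^sub>m m"

definition skew_hermitian :: "complex mat \<Rightarrow> bool" where
  "skew_hermitian K \<longleftrightarrow> ctrans K = - K"

definition USp :: "nat \<Rightarrow> complex mat set" where
  "USp n = {Z. unitary_mat (2*n) Z \<and> symplectic n Z}"

definition cinner :: "complex vec \<Rightarrow> complex vec \<Rightarrow> complex" where
  "cinner u v = (\<Sum>i<dim_vec u. u $ i * cnj (v $ i))"

definition ftilde :: "nat \<Rightarrow> complex mat \<Rightarrow> complex mat \<Rightarrow> real" where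
  "ftilde n A Z = (\<Sum>j<2*n. (cmod (cinner (A *\<^sub>v col Z j) (col Z j)))^2)"

definition rinner :: "complex mat \<Rightarrow> complex mat \<Rightarrow> real" where
  "rinner X Y = Re (\<Sum>i<dim_col X. (ctrans X * Y) $$ (i,i))"

definition Emat :: "nat \<Rightarrow> nat \<Rightarrow> nat \<Rightarrow> complex mat" where
  "Emat m j k = mat m m (\<lambda>(a,b). if a = j \<and> b = k then 1 else 0)"

(* Euclidean gradient of a real function g on m x m complex matrices:
   entry (j,k) = dg/dRe z_jk + i dg/dIm z_jk *)
definition egrad :: "nat \<Rightarrow> (complex mat \<Rightarrow> real) \<Rightarrow> complex mat \<Rightarrow> complex mat" where
  "egrad m g Z = mat m m (\<lambda>(j,k).
      complex_of_real (THE D. ((\<lambda>t. g (Z + complex_of_real t \<cdot>\<^sub>m Emat m j k)) has_real_derivative D) (at 0))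
      + \<i> * complex_of_real (THE D. ((\<lambda>t. g (Z + (\<i> * complex_of_real t) \<cdot>\<^sub>m Emat m j k)) has_real_derivative D) (at 0)))"

definition tangent_space :: "nat \<Rightarrow> complex mat \<Rightarrow> complex mat set" where
  "tangent_space n Z = {Z * K | K. hamiltonian n K \<and> skew_hermitian K}"

definition orth_proj :: "complex mat set \<Rightarrow> complex mat \<Rightarrow> complex mat" where
  "orth_proj T G = (THE P. P \<in> T \<and> (\<forall>Y\<in>T. rinner (G - P) Y = 0))"

definition rgrad :: "nat \<Rightarrow> complex mat \<Rightarrow> complex mat \<Rightarrow> complex mat" where
  "rgrad n A Z = orth_proj (tangent_space n Z) (egrad (2*n) (ftilde n A) Z)"

end

theory Submission
  imports Defs
begin

text \<open>Write \<open>a j = \<langle>A z\<^sub>j, z\<^sub>j\<rangle>\<close> for the columns \<open>z\<^sub>j\<close> of \<open>Z\<close>. Differentiating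
  \<open>ftilde\<close> entrywise gives the Euclidean gradient \<open>G = 2 (A Z diag (cnj a) + A\<^sup>H Z diag a)\<close>,
  so \<open>W = Z\<^sup>H G\<close> has the real diagonal entries \<open>4 \<bar>a j\<bar>\<^sup>2\<close>. For unitary \<open>Z\<close> the map
  \<open>K \<mapsto> Z K\<close> is an isometry for \<open>Re tr (X\<^sup>H Y)\<close>, hence the projection of \<open>G\<close> onto the
  tangent space is \<open>Z X\<close>, where \<open>X\<close> is the projection of \<open>W\<close> onto the skew-Hermitian
  Hamiltonian matrices: with \<open>S = (W - W\<^sup>H) / 2\<close> it is \<open>X = (S - J S J) / 2\<close>. The diagonal
  entry \<open>X (j,j) = (S (j,j) + S (j',j')) / 2\<close>, with \<open>j'\<close> the partner of \<open>j\<close> under \<open>J\<close>,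
  vanishes since \<open>W\<close> has real diagonal.\<close>

lemma ctrans_dim [simp]: "dim_row (ctrans A) = dim_col A" "dim_col (ctrans A) = dim_row A"
  by (auto simp: ctrans_def)

lemma ctrans_carrier [simp]: "A \<in> carrier_mat r c \<Longrightarrow> ctrans A \<in> carrier_mat c r"
  unfolding carrier_mat_def by simp

lemma index_ctrans [simp]: "i < dim_col A \<Longrightarrow> j < dim_row A \<Longrightarrow> ctrans A $$ (i,j) = cnj (A $$ (j,i))"
  by (auto simp: ctrans_def)

lemma ctrans_ctrans [simp]: "ctrans (ctrans A) = A"
  by (intro eq_matI) auto

lemma ctrans_mult: "A \<in> carrier_mat a b \<Longrightarrow> B \<in> carrier_mat b c \<Longrightarrow> ctrans (A * B) = ctrans B * ctrans A"
  by (intro eq_matI) (auto simp: scalar_prod_def mult.commute intro!: sum.cong)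

lemma ctrans_minus: "A \<in> carrier_mat a b \<Longrightarrow> B \<in> carrier_mat a b \<Longrightarrow> ctrans (A - B) = ctrans A - ctrans B"
  by (intro eq_matI) auto

definition trace :: "complex mat \<Rightarrow> complex" where
  "trace M = (\<Sum>i<dim_row M. M $$ (i,i))"

lemma trace_mult_comm:
  assumes "A \<in> carrier_mat a b" "B \<in> carrier_mat b a"
  shows "trace (A * B) = trace (B * A)"
proof -
  have "trace (A * B) = (\<Sum>i<a. \<Sum>k<b. A $$ (i,k) * B $$ (k,i))"
    using assms by (auto simp: trace_def scalar_prod_def atLeast0LessThan intro!: sum.cong)
  also have "\<dots> = (\<Sum>k<b. \<Sum>i<a. B $$ (k,i) * A $$ (i,k))"
    by (subst sum.swap) (simp add: mult.commute)
  also have "\<dots> = trace (B * A)"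
    using assms by (auto simp: trace_def scalar_prod_def atLeast0LessThan intro!: sum.cong)
  finally show ?thesis .
qed

lemma trace_ctrans: "A \<in> carrier_mat m m \<Longrightarrow> trace (ctrans A) = cnj (trace A)"
  by (auto simp: trace_def)

lemma trace_minus: "A \<in> carrier_mat m m \<Longrightarrow> B \<in> carrier_mat m m \<Longrightarrow> trace (A - B) = trace A - trace B"
  by (auto simp: trace_def sum_subtractf)

lemma trace_smult: "A \<in> carrier_mat m m \<Longrightarrow> trace (c \<cdot>\<^sub>m A) = c * trace A"
  by (auto simp: trace_def sum_distrib_left)

section \<open>The real inner product and orthogonal projections\<close>

lemma rinner_eq_trace: "rinner M N = Re (trace (ctrans M * N))"
  by (simp add: rinner_def trace_def)

lemma rinner_skew_hermitian:
  assumes M: "M \<in> carrier_mat m m" and K: "K \<in> carrier_mat m m" and "skew_hermitian K"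
  shows "rinner M K = - Re (trace (M * K))"
proof -
  have "ctrans M * K \<in> carrier_mat m m" using M K by (metis ctrans_carrier mult_carrier_mat)
  hence "trace (ctrans M * K) = cnj (trace (ctrans (ctrans M * K)))"
    by (simp add: trace_ctrans)
  also have "ctrans (ctrans M * K) = - (K * M)"
    using assms by (simp add: ctrans_mult[of _ m m _ m] skew_hermitian_def)
  also have "trace (- (K * M)) = - trace (K * M)"
    using M K by (simp add: trace_def sum_negf)
  also have "trace (K * M) = trace (M * K)"
    by (rule trace_mult_comm[OF K M])
  finally show ?thesis by (simp add: rinner_eq_trace)
qed

lemma rinner_minus_left:
  "X \<in> carrier_mat m m \<Longrightarrow> Y \<in> carrier_mat m m \<Longrightarrow> D \<in> carrier_mat m m \<Longrightarrow>
    rinner (X - Y) D = rinner X D - rinner Y D"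
proof -
  assume "X \<in> carrier_mat m m" "Y \<in> carrier_mat m m" "D \<in> carrier_mat m m"
  moreover have "ctrans X * D \<in> carrier_mat m m" "ctrans Y * D \<in> carrier_mat m m"
    using calculation by (metis ctrans_carrier mult_carrier_mat)+
  ultimately show ?thesis
    by (simp add: rinner_eq_trace ctrans_minus minus_mult_distrib_mat[of _ m m] trace_minus)
qed

lemma rinner_self:
  assumes "M \<in> carrier_mat r c"
  shows "rinner M M = (\<Sum>i<c. \<Sum>k<r. (cmod (M $$ (k,i)))\<^sup>2)"
proof -
  have sq: "Re z * Re z + Im z * Im z = (cmod z)\<^sup>2" for z :: complex
    using cmod_power2[of z] by (simp add: power2_eq_square)
  show ?thesis
    using assms by (auto simp: rinner_def scalar_prod_def atLeast0LessThan sq intro!: sum.cong)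
qed

lemma eq_of_rinner_diff_self_eq_0:
  assumes M: "M \<in> carrier_mat r c" and N: "N \<in> carrier_mat r c"
    and "rinner (M - N) (M - N) = 0"
  shows "M = N"
proof -
  have "M - N \<in> carrier_mat r c" using N by (rule minus_carrier_mat)
  hence "\<forall>i<c. \<forall>k<r. (cmod ((M - N) $$ (k,i)))\<^sup>2 = 0"
    using assms(3) by (simp add: rinner_self sum_nonneg_eq_0_iff sum_nonneg del: index_minus_mat)
  thus ?thesis using M N by (intro eq_matI) auto
qed

lemma orth_proj_eqI:
  assumes T: "T \<subseteq> carrier_mat m m" and diff: "\<And>X Y. X \<in> T \<Longrightarrow> Y \<in> T \<Longrightarrow> X - Y \<in> T"
    and G: "G \<in> carrier_mat m m" and P: "P \<in> T" and orth: "\<forall>Y\<in>T. rinner (G - P) Y = 0"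
  shows "orth_proj T G = P"
  unfolding orth_proj_def
proof (rule the_equality)
  fix Q assume Q: "Q \<in> T \<and> (\<forall>Y\<in>T. rinner (G - Q) Y = 0)"
  have QP: "Q - P \<in> T" and carr: "Q \<in> carrier_mat m m" "P \<in> carrier_mat m m"
    using Q P diff T by auto
  have "Q - P = (G - P) - (G - Q)"
    using G carr by (intro eq_matI) auto
  hence "rinner (Q - P) (Q - P) = rinner ((G - P) - (G - Q)) (Q - P)"
    by simp
  also have "\<dots> = rinner (G - P) (Q - P) - rinner (G - Q) (Q - P)"
    using G carr by (intro rinner_minus_left) auto
  also have "\<dots> = 0" using orth Q QP by simp
  finally show "Q = P" using carr by (intro eq_of_rinner_diff_self_eq_0)
qed (use P orth in auto)

lemma rinner_mult_right:
  assumes "G \<in> carrier_mat m m" "Z \<in> carrier_mat m m" "K \<in> carrier_mat m m"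
  shows "rinner G (Z * K) = rinner (ctrans Z * G) K"
  using assms by (simp add: rinner_eq_trace ctrans_mult[of _ m m _ m] assoc_mult_mat[of _ m m _ m _ m])

definition Jpartner :: "nat \<Rightarrow> nat \<Rightarrow> nat" where
  "Jpartner n i = (if i < n then i + n else i - n)"

definition Jsign :: "nat \<Rightarrow> nat \<Rightarrow> complex" where
  "Jsign n i = (if i < n then 1 else -1)"

lemma Jpartner_less: "i < 2*n \<Longrightarrow> Jpartner n i < 2*n"
  by (auto simp: Jpartner_def)

lemma Jpartner_Jpartner [simp]: "i < 2*n \<Longrightarrow> Jpartner n (Jpartner n i) = i"
  by (auto simp: Jpartner_def)

lemma Jsign_Jpartner [simp]: "i < 2*n \<Longrightarrow> Jsign n (Jpartner n i) = - Jsign n i"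
  by (auto simp: Jpartner_def Jsign_def)

lemma Jsign_mult_self [simp]: "Jsign n i * Jsign n i = 1"
  by (simp add: Jsign_def)

lemma cnj_Jsign [simp]: "cnj (Jsign n i) = Jsign n i"
  by (simp add: Jsign_def)

lemma Jmat_carrier [simp]: "Jmat n \<in> carrier_mat (2*n) (2*n)"
  unfolding Jmat_def by (metis four_block_carrier_mat mult_2 zero_carrier_mat)

lemma Jmat_dim [simp]: "dim_row (Jmat n) = 2*n" "dim_col (Jmat n) = 2*n"
  using Jmat_carrier[of n] unfolding carrier_mat_def by auto

lemma Jmat_index:
  "i < 2*n \<Longrightarrow> j < 2*n \<Longrightarrow> Jmat n $$ (i,j) = (if j = Jpartner n i then Jsign n i else 0)"
  unfolding Jmat_def Jpartner_def Jsign_def by auto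

lemma Jmat_index_col:
  "i < 2*n \<Longrightarrow> j < 2*n \<Longrightarrow> Jmat n $$ (i,j) = (if i = Jpartner n j then - Jsign n j else 0)"
  unfolding Jmat_def Jpartner_def Jsign_def by auto

lemma sum_delta_mult:
  fixes f :: "nat \<Rightarrow> 'a :: semiring_0"
  assumes "a < m"
  shows "(\<Sum>k<m. (if k = a then c else 0) * f k) = c * f a"
    and "(\<Sum>k<m. f k * (if k = a then c else 0)) = f a * c"
  using assms by (simp_all add: if_distrib[where f = "\<lambda>x. x * _"] if_distrib[where f = "\<lambda>x. _ * x"]
      cong: if_cong)

lemma Jmat_mult_index:
  assumes "M \<in> carrier_mat (2*n) c" "i < 2*n" "j < c"
  shows "(Jmat n * M) $$ (i,j) = Jsign n i * M $$ (Jpartner n i, j)"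
proof -
  have "(Jmat n * M) $$ (i,j) = (\<Sum>k<2*n. (if k = Jpartner n i then Jsign n i else 0) * M $$ (k,j))"
    using assms by (auto simp: scalar_prod_def Jmat_index atLeast0LessThan intro!: sum.cong)
  thus ?thesis using Jpartner_less[OF assms(2)] by (simp add: sum_delta_mult)
qed

lemma mult_Jmat_index:
  assumes "M \<in> carrier_mat r (2*n)" "i < r" "j < 2*n"
  shows "(M * Jmat n) $$ (i,j) = - Jsign n j * M $$ (i, Jpartner n j)"
proof -
  have "(M * Jmat n) $$ (i,j) = (\<Sum>k<2*n. M $$ (i,k) * (if k = Jpartner n j then - Jsign n j else 0))"
    using assms by (auto simp: scalar_prod_def Jmat_index_col atLeast0LessThan intro!: sum.cong)
  thus ?thesis using Jpartner_less[OF assms(3)] by (simp add: sum_delta_mult)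
qed

lemma Jmat_mult_Jmat: "Jmat n * Jmat n = - 1\<^sub>m (2*n)"
  by (intro eq_matI)
    (auto simp: Jmat_mult_index[of "Jmat n" n "2*n"] Jmat_index Jpartner_less simp del: index_mult_mat(1))

lemma ctrans_Jmat: "ctrans (Jmat n) = - Jmat n"
  by (intro eq_matI) (auto simp: Jmat_index Jmat_index_col)

lemma Jmat_mult_mult_Jmat_index:
  assumes "S \<in> carrier_mat (2*n) (2*n)" "i < 2*n" "j < 2*n"
  shows "(Jmat n * S * Jmat n) $$ (i,j) = - Jsign n i * Jsign n j * S $$ (Jpartner n i, Jpartner n j)"
proof -
  have "(Jmat n * S * Jmat n) $$ (i,j) = - Jsign n j * (Jmat n * S) $$ (i, Jpartner n j)"
    by (rule mult_Jmat_index) (use assms in auto)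
  also have "(Jmat n * S) $$ (i, Jpartner n j) = Jsign n i * S $$ (Jpartner n i, Jpartner n j)"
    by (rule Jmat_mult_index) (use assms Jpartner_less in auto)
  finally show ?thesis by (simp add: algebra_simps)
qed

lemma hamiltonian_iff_commute_Jmat:
  assumes K: "K \<in> carrier_mat (2*n) (2*n)" and "skew_hermitian K"
  shows "hamiltonian n K \<longleftrightarrow> Jmat n * K = K * Jmat n"
proof -
  have "ctrans (Jmat n * K) = K * Jmat n"
    using assms by (simp add: ctrans_mult[of _ "2*n" "2*n" _ "2*n"] ctrans_Jmat skew_hermitian_def
        uminus_mult_left_mat[of K] uminus_mult_right_mat[of "-K"])
  thus ?thesis using K by (auto simp: hamiltonian_def)
qed

lemma skew_hamiltonian_minus:
  assumes "hamiltonian n K" "skew_hermitian K" "hamiltonian n L" "skew_hermitian L"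
  shows "hamiltonian n (K - L) \<and> skew_hermitian (K - L)"
proof -
  have K: "K \<in> carrier_mat (2*n) (2*n)" and L: "L \<in> carrier_mat (2*n) (2*n)"
    using assms by (auto simp: hamiltonian_def)
  have skew: "skew_hermitian (K - L)"
    using assms K L by (simp add: skew_hermitian_def ctrans_minus[of _ "2*n" "2*n"])
      (intro eq_matI; auto)
  have "Jmat n * (K - L) = (K - L) * Jmat n"
    using assms K L by (simp add: hamiltonian_iff_commute_Jmat mult_minus_distrib_mat[OF Jmat_carrier K L]
        minus_mult_distrib_mat[OF K L Jmat_carrier])
  moreover have "K - L \<in> carrier_mat (2*n) (2*n)" using L by (rule minus_carrier_mat)
  ultimately show ?thesis using skew by (simp add: hamiltonian_iff_commute_Jmat)
qed

section \<open>Projection onto skew-Hermitian Hamiltonian matrices\<close>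

definition skew_part :: "complex mat \<Rightarrow> complex mat" where
  "skew_part W = (1/2) \<cdot>\<^sub>m (W - ctrans W)"

definition skew_ham_proj :: "nat \<Rightarrow> complex mat \<Rightarrow> complex mat" where
  "skew_ham_proj n W = (1/2) \<cdot>\<^sub>m (skew_part W - Jmat n * skew_part W * Jmat n)"

lemma skew_part_carrier [simp]: "W \<in> carrier_mat m m \<Longrightarrow> skew_part W \<in> carrier_mat m m"
  by (simp add: skew_part_def minus_carrier_mat)

lemma skew_part_index:
  "W \<in> carrier_mat m m \<Longrightarrow> i < m \<Longrightarrow> j < m \<Longrightarrow> skew_part W $$ (i,j) = (W $$ (i,j) - cnj (W $$ (j,i))) / 2"
  by (simp add: skew_part_def)

lemma cnj_skew_part_index:
  "W \<in> carrier_mat m m \<Longrightarrow> i < m \<Longrightarrow> j < m \<Longrightarrow> cnj (skew_part W $$ (j,i)) = - skew_part W $$ (i,j)"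
  by (simp add: skew_part_index diff_divide_distrib)

lemma skew_ham_proj_dim [simp]: "dim_row (skew_ham_proj n W) = 2*n" "dim_col (skew_ham_proj n W) = 2*n"
  by (simp_all add: skew_ham_proj_def)

lemma skew_ham_proj_carrier [simp]: "skew_ham_proj n W \<in> carrier_mat (2*n) (2*n)"
  by (rule carrier_matI) simp_all

lemma skew_ham_proj_index:
  assumes "W \<in> carrier_mat (2*n) (2*n)" "i < 2*n" "j < 2*n"
  shows "skew_ham_proj n W $$ (i,j) =
    (skew_part W $$ (i,j) + Jsign n i * Jsign n j * skew_part W $$ (Jpartner n i, Jpartner n j)) / 2"
  using assms by (simp add: skew_ham_proj_def Jmat_mult_mult_Jmat_index del: index_mult_mat(1))

lemma skew_hermitian_skew_ham_proj:
  assumes "W \<in> carrier_mat (2*n) (2*n)"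
  shows "skew_hermitian (skew_ham_proj n W)"
  unfolding skew_hermitian_def
proof (intro eq_matI)
  fix i j assume "i < dim_row (- skew_ham_proj n W)" "j < dim_col (- skew_ham_proj n W)"
  hence ij: "i < 2*n" "j < 2*n" by auto
  have cnj_half: "cnj ((a + s * b) / 2) = - ((x + s * y) / 2)"
    if "cnj s = s" "cnj a = - x" "cnj b = - y" for a b s x y :: complex
    using that by (simp add: add_divide_distrib)
  have "ctrans (skew_ham_proj n W) $$ (i,j) = cnj (skew_ham_proj n W $$ (j,i))"
    using ij by simp
  also have "\<dots> = - skew_ham_proj n W $$ (i,j)"
    using assms ij Jpartner_less[OF ij(1)] Jpartner_less[OF ij(2)]
    by (simp only: skew_ham_proj_index mult.commute[of "Jsign n j"])
      (rule cnj_half; simp add: cnj_skew_part_index)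
  finally show "ctrans (skew_ham_proj n W) $$ (i,j) = (- skew_ham_proj n W) $$ (i,j)"
    using ij by simp
qed auto

lemma hamiltonian_skew_ham_proj:
  assumes W: "W \<in> carrier_mat (2*n) (2*n)"
  shows "hamiltonian n (skew_ham_proj n W)"
proof -
  let ?X = "skew_ham_proj n W"
  have "Jmat n * ?X = ?X * Jmat n"
  proof (intro eq_matI)
    fix i j assume "i < dim_row (?X * Jmat n)" "j < dim_col (?X * Jmat n)"
    hence ij: "i < 2*n" "j < 2*n" using W by auto
    show "(Jmat n * ?X) $$ (i,j) = (?X * Jmat n) $$ (i,j)"
      using W ij Jpartner_less[OF ij(1)] Jpartner_less[OF ij(2)]
      by (simp add: Jmat_mult_index[of _ n "2*n"] mult_Jmat_index[of _ "2*n"] skew_ham_proj_index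
          del: index_mult_mat(1))
        (cases "i < n"; cases "j < n"; simp add: Jsign_def)
  qed (use W in auto)
  thus ?thesis
    using W by (simp add: hamiltonian_iff_commute_Jmat skew_hermitian_skew_ham_proj)
qed

lemma skew_ham_proj_diag:
  assumes W: "W \<in> carrier_mat (2*n) (2*n)" and real_diag: "\<forall>j<2*n. Im (W $$ (j,j)) = 0"
    and i: "i < 2*n"
  shows "skew_ham_proj n W $$ (i,i) = 0"
proof -
  have "skew_part W $$ (j,j) = 0" if "j < 2*n" for j
    using W real_diag that by (simp add: skew_part_index complex_eq_iff)
  thus ?thesis using W i Jpartner_less[OF i] by (simp add: skew_ham_proj_index)
qed

lemma trace_skew_ham_proj_mult:
  assumes W: "W \<in> carrier_mat (2*n) (2*n)" and K: "K \<in> carrier_mat (2*n) (2*n)"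
    and commute: "Jmat n * K = K * Jmat n"
  shows "trace (skew_ham_proj n W * K) = trace (skew_part W * K)"
proof -
  let ?J = "Jmat n" and ?S = "skew_part W"
  have S: "?S \<in> carrier_mat (2*n) (2*n)" using W by simp
  have "?J * K * ?J = K * (?J * ?J)"
    using K by (simp add: commute assoc_mult_mat[OF K Jmat_carrier Jmat_carrier])
  also have "\<dots> = - K"
    using K by (simp add: Jmat_mult_Jmat)
  finally have JKJ: "?J * K * ?J = - K" .
  have J: "?J \<in> carrier_mat (2*n) (2*n)" by simp
  have "trace (?J * ?S * ?J * K) = trace (?J * (?S * ?J * K))"
    by (simp only: assoc_mult_mat[OF J S J] assoc_mult_mat[OF J mult_carrier_mat[OF S J] K])
  also have "\<dots> = trace (?S * ?J * K * ?J)"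
    using J S K by (simp add: trace_mult_comm[of ?J "2*n" "2*n"] del: Jmat_carrier)
  also have "?S * ?J * K * ?J = ?S * (?J * K * ?J)"
    by (simp only: assoc_mult_mat[OF S J K] assoc_mult_mat[OF S mult_carrier_mat[OF J K] J])
  also have "trace (?S * (?J * K * ?J)) = - trace (?S * K)"
    using S K by (simp add: JKJ trace_def sum_negf)
  finally have JSJK: "trace (?J * ?S * ?J * K) = - trace (?S * K)" .
  have JSJ: "?J * ?S * ?J \<in> carrier_mat (2*n) (2*n)" using mult_carrier_mat[OF mult_carrier_mat[OF J S] J] .
  have "skew_ham_proj n W * K = (1/2) \<cdot>\<^sub>m (?S * K - ?J * ?S * ?J * K)"
    unfolding skew_ham_proj_def
    by (simp add: mult_smult_assoc_mat[of _ "2*n" "2*n" K "2*n"] minus_carrier_mat[OF JSJ] K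
        minus_mult_distrib_mat[OF S JSJ K])
  also have "trace \<dots> = (1/2) * (trace (?S * K) - trace (?J * ?S * ?J * K))"
    using S K JSJ by (simp add: trace_smult[of _ "2*n"] trace_minus[of _ "2*n"] minus_carrier_mat)
  finally show ?thesis by (simp add: JSJK)
qed

lemma rinner_diff_skew_ham_proj:
  assumes W: "W \<in> carrier_mat (2*n) (2*n)" and "hamiltonian n K" and "skew_hermitian K"
  shows "rinner (W - skew_ham_proj n W) K = 0"
proof -
  have K: "K \<in> carrier_mat (2*n) (2*n)" using assms by (simp add: hamiltonian_def)
  have "Re (trace (ctrans W * K)) = - Re (trace (W * K))"
    using rinner_skew_hermitian[OF W K] assms by (simp add: rinner_eq_trace)
  moreover have "W - ctrans W \<in> carrier_mat (2*n) (2*n)" "ctrans W * K \<in> carrier_mat (2*n) (2*n)"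
    "W * K - ctrans W * K \<in> carrier_mat (2*n) (2*n)"
    using W K by (auto intro: minus_carrier_mat)
  ultimately have "Re (trace (skew_part W * K)) = Re (trace (W * K))"
    using W K by (simp add: skew_part_def mult_smult_assoc_mat[of _ "2*n" "2*n"]
        minus_mult_distrib_mat[of _ "2*n" "2*n"] trace_smult[of _ "2*n"] trace_minus[of _ "2*n"])
  moreover have "trace (skew_ham_proj n W * K) = trace (skew_part W * K)"
    using W K assms by (simp add: trace_skew_ham_proj_mult hamiltonian_iff_commute_Jmat)
  moreover have "rinner (W - skew_ham_proj n W) K
      = Re (trace (skew_ham_proj n W * K)) - Re (trace (W * K))"
  proof -
    have "W * K \<in> carrier_mat (2*n) (2*n)" "skew_ham_proj n W * K \<in> carrier_mat (2*n) (2*n)"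
      "W - skew_ham_proj n W \<in> carrier_mat (2*n) (2*n)"
      using W K by (auto intro: minus_carrier_mat)
    thus ?thesis
      using W K assms by (simp add: rinner_skew_hermitian[of _ "2*n"]
          minus_mult_distrib_mat[of _ "2*n" "2*n"] trace_minus[of _ "2*n"])
  qed
  ultimately show ?thesis by simp
qed

section \<open>Projection onto the tangent space\<close>

lemma tangent_space_carrier: "Z \<in> carrier_mat (2*n) (2*n) \<Longrightarrow> tangent_space n Z \<subseteq> carrier_mat (2*n) (2*n)"
  by (auto simp: tangent_space_def hamiltonian_def)

lemma tangent_space_diff:
  assumes Z: "Z \<in> carrier_mat (2*n) (2*n)" and "X \<in> tangent_space n Z" "Y \<in> tangent_space n Z"
  shows "X - Y \<in> tangent_space n Z"
proof -
  obtain K L where XY: "X = Z * K" "Y = Z * L" and K: "hamiltonian n K" "skew_hermitian K"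
    and L: "hamiltonian n L" "skew_hermitian L"
    using assms unfolding tangent_space_def by blast
  have "K \<in> carrier_mat (2*n) (2*n)" "L \<in> carrier_mat (2*n) (2*n)"
    using K L by (auto simp: hamiltonian_def)
  hence "Z * K - Z * L = Z * (K - L)"
    using Z by (simp add: mult_minus_distrib_mat)
  thus ?thesis
    using skew_hamiltonian_minus[OF K L] unfolding XY tangent_space_def by blast
qed

lemma orth_proj_tangent_space:
  assumes "unitary_mat (2*n) Z" and G: "G \<in> carrier_mat (2*n) (2*n)"
  shows "orth_proj (tangent_space n Z) G = Z * skew_ham_proj n (ctrans Z * G)"
proof -
  have Z: "Z \<in> carrier_mat (2*n) (2*n)" and unitary: "ctrans Z * Z = 1\<^sub>m (2*n)"
    using assms by (auto simp: unitary_mat_def)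
  define W where "W = ctrans Z * G"
  have W: "W \<in> carrier_mat (2*n) (2*n)"
    unfolding W_def using mult_carrier_mat[OF ctrans_carrier[OF Z] G] .
  have tangent: "Z * skew_ham_proj n W \<in> tangent_space n Z"
    unfolding tangent_space_def
    using hamiltonian_skew_ham_proj[OF W] skew_hermitian_skew_ham_proj[OF W] by blast
  have "ctrans Z * (Z * skew_ham_proj n W) = skew_ham_proj n W"
    using assoc_mult_mat[OF ctrans_carrier[OF Z] Z skew_ham_proj_carrier, symmetric] by (simp add: unitary)
  hence "ctrans Z * (G - Z * skew_ham_proj n W) = W - skew_ham_proj n W"
    using Z G by (simp add: W_def mult_minus_distrib_mat[of _ "2*n" "2*n"])
  hence normal: "\<forall>Y\<in>tangent_space n Z. rinner (G - Z * skew_ham_proj n W) Y = 0"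
    using Z G W rinner_diff_skew_ham_proj[OF W]
    by (auto simp: tangent_space_def rinner_mult_right[of _ "2*n"] hamiltonian_def minus_carrier_mat)
  show ?thesis
    unfolding W_def[symmetric]
    by (rule orth_proj_eqI[OF tangent_space_carrier[OF Z] tangent_space_diff[OF Z] G tangent normal])
qed

section \<open>The Euclidean gradient\<close>

lemma col_add_smult_Emat:
  assumes "Z \<in> carrier_mat m m" "j < m" "p < m"
  shows "col (Z + s \<cdot>\<^sub>m Emat m p q) j = (if j = q then col Z j + s \<cdot>\<^sub>v unit_vec m p else col Z j)"
  using assms by (intro eq_vecI) (auto simp: Emat_def simp del: col_add)

lemma cinner_mult_vec_add_smult_unit:
  assumes A: "A \<in> carrier_mat m m" and z: "z \<in> carrier_vec m" and p: "p < m"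
  shows "cinner (A *\<^sub>v (z + s \<cdot>\<^sub>v unit_vec m p)) (z + s \<cdot>\<^sub>v unit_vec m p)
    = cinner (A *\<^sub>v z) z + s * cnj ((ctrans A *\<^sub>v z) $ p) + cnj s * (A *\<^sub>v z) $ p
      + s * cnj s * A $$ (p,p)"
proof -
  have Az: "(A *\<^sub>v (z + s \<cdot>\<^sub>v unit_vec m p)) $ i = (A *\<^sub>v z) $ i + s * A $$ (i,p)" if "i < m" for i
    using A z p that by (simp add: mult_add_distrib_mat_vec[of A m m] mult_mat_vec[of A m m])
  have "cinner (A *\<^sub>v (z + s \<cdot>\<^sub>v unit_vec m p)) (z + s \<cdot>\<^sub>v unit_vec m p)
     = (\<Sum>i<m. ((A *\<^sub>v z) $ i + s * A $$ (i,p)) * cnj (z $ i + s * (if i = p then 1 else 0)))"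
    unfolding cinner_def using A z Az p by (auto intro!: sum.cong)
  also have "\<dots> = (\<Sum>i<m. (A *\<^sub>v z) $ i * cnj (z $ i)) + (\<Sum>i<m. s * (A $$ (i,p) * cnj (z $ i)))
      + (\<Sum>i<m. if i = p then cnj s * (A *\<^sub>v z) $ i + s * cnj s * A $$ (i,p) else 0)"
    by (simp only: sum.distrib[symmetric]) (auto intro!: sum.cong simp: algebra_simps)
  finally have "cinner (A *\<^sub>v (z + s \<cdot>\<^sub>v unit_vec m p)) (z + s \<cdot>\<^sub>v unit_vec m p)
     = (\<Sum>i<m. (A *\<^sub>v z) $ i * cnj (z $ i)) + s * (\<Sum>i<m. A $$ (i,p) * cnj (z $ i))
      + (cnj s * (A *\<^sub>v z) $ p + s * cnj s * A $$ (p,p))"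
    using p by (simp add: sum_distrib_left)
  moreover have "cnj ((ctrans A *\<^sub>v z) $ p) = (\<Sum>i<m. A $$ (i,p) * cnj (z $ i))"
    using A z p by (simp add: scalar_prod_def atLeast0LessThan mult.commute)
  ultimately show ?thesis
    using A by (simp add: cinner_def)
qed

lemma ftilde_add_smult_Emat:
  assumes A: "A \<in> carrier_mat (2*n) (2*n)" and Z: "Z \<in> carrier_mat (2*n) (2*n)"
    and p: "p < 2*n" and q: "q < 2*n"
  shows "ftilde n A (Z + s \<cdot>\<^sub>m Emat (2*n) p q) =
    (\<Sum>j\<in>{..<2*n} - {q}. (cmod (cinner (A *\<^sub>v col Z j) (col Z j)))\<^sup>2) +
    (cmod (cinner (A *\<^sub>v col Z q) (col Z q) + s * cnj ((ctrans A * Z) $$ (p,q))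
      + cnj s * (A * Z) $$ (p,q) + s * cnj s * A $$ (p,p)))\<^sup>2"
proof -
  have "ftilde n A (Z + s \<cdot>\<^sub>m Emat (2*n) p q) =
    (cmod (cinner (A *\<^sub>v col (Z + s \<cdot>\<^sub>m Emat (2*n) p q) q) (col (Z + s \<cdot>\<^sub>m Emat (2*n) p q) q)))\<^sup>2 +
    (\<Sum>j\<in>{..<2*n} - {q}. (cmod (cinner (A *\<^sub>v col (Z + s \<cdot>\<^sub>m Emat (2*n) p q) j)
      (col (Z + s \<cdot>\<^sub>m Emat (2*n) p q) j)))\<^sup>2)"
    unfolding ftilde_def using q by (simp add: sum.remove)
  also have "(\<Sum>j\<in>{..<2*n} - {q}. (cmod (cinner (A *\<^sub>v col (Z + s \<cdot>\<^sub>m Emat (2*n) p q) j)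
      (col (Z + s \<cdot>\<^sub>m Emat (2*n) p q) j)))\<^sup>2)
    = (\<Sum>j\<in>{..<2*n} - {q}. (cmod (cinner (A *\<^sub>v col Z j) (col Z j)))\<^sup>2)"
    using Z p by (intro sum.cong) (auto simp: col_add_smult_Emat simp del: col_add)
  also have "col (Z + s \<cdot>\<^sub>m Emat (2*n) p q) q = col Z q + s \<cdot>\<^sub>v unit_vec (2*n) p"
    using Z p q by (simp add: col_add_smult_Emat del: col_add)
  also have "cinner (A *\<^sub>v (col Z q + s \<cdot>\<^sub>v unit_vec (2*n) p)) (col Z q + s \<cdot>\<^sub>v unit_vec (2*n) p) =
    cinner (A *\<^sub>v col Z q) (col Z q) + s * cnj ((ctrans A * Z) $$ (p,q))
      + cnj s * (A * Z) $$ (p,q) + s * cnj s * A $$ (p,p)"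
    using A Z p q by (simp add: cinner_mult_vec_add_smult_unit)
  finally show ?thesis by simp
qed

lemma has_real_derivative_cmod_sq_quadratic:
  fixes C :: real and a \<alpha> \<beta> :: complex
  shows "((\<lambda>t. C + (cmod (a + of_real t * \<alpha> + of_real t ^ 2 * \<beta>))\<^sup>2) has_real_derivative
          2 * Re (cnj a * \<alpha>)) (at 0)"
proof -
  have "(\<lambda>t. C + (cmod (a + of_real t * \<alpha> + of_real t ^ 2 * \<beta>))\<^sup>2) =
     (\<lambda>t. C + (Re a + t * Re \<alpha> + t\<^sup>2 * Re \<beta>)\<^sup>2 + (Im a + t * Im \<alpha> + t\<^sup>2 * Im \<beta>)\<^sup>2)"
    by (simp add: cmod_power2 add.assoc)
  moreover have "((\<lambda>t. C + (Re a + t * Re \<alpha> + t\<^sup>2 * Re \<beta>)\<^sup>2 + (Im a + t * Im \<alpha> + t\<^sup>2 * Im \<beta>)\<^sup>2)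
      has_real_derivative 2 * Re (cnj a * \<alpha>)) (at 0)"
    by (auto intro!: derivative_eq_intros simp: algebra_simps)
  ultimately show ?thesis by simp
qed

lemma THE_has_real_derivative:
  "(f has_real_derivative D) (at x) \<Longrightarrow> (THE D. (f has_real_derivative D) (at x)) = D"
  by (auto intro: DERIV_unique)

lemma egrad_carrier [simp]: "egrad m g Z \<in> carrier_mat m m"
  by (simp add: egrad_def)

lemma egrad_ftilde_index:
  assumes A: "A \<in> carrier_mat (2*n) (2*n)" and Z: "Z \<in> carrier_mat (2*n) (2*n)"
    and p: "p < 2*n" and q: "q < 2*n"
  defines "a \<equiv> cinner (A *\<^sub>v col Z q) (col Z q)"
  shows "egrad (2*n) (ftilde n A) Z $$ (p,q) = 2 * (cnj a * (A * Z) $$ (p,q) + a * (ctrans A * Z) $$ (p,q))"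
proof -
  define u where "u = (A * Z) $$ (p,q)"
  define v where "v = cnj ((ctrans A * Z) $$ (p,q))"
  define C where "C = (\<Sum>j\<in>{..<2*n} - {q}. (cmod (cinner (A *\<^sub>v col Z j) (col Z j)))\<^sup>2)"
  have perturb: "ftilde n A (Z + s \<cdot>\<^sub>m Emat (2*n) p q) =
      C + (cmod (a + s * v + cnj s * u + s * cnj s * A $$ (p,p)))\<^sup>2" for s
    unfolding a_def u_def v_def C_def by (rule ftilde_add_smult_Emat[OF A Z p q])
  have re: "(\<lambda>t. ftilde n A (Z + complex_of_real t \<cdot>\<^sub>m Emat (2*n) p q)) =
      (\<lambda>t. C + (cmod (a + of_real t * (v + u) + of_real t ^ 2 * A $$ (p,p)))\<^sup>2)"
    by (simp only: perturb) (simp add: algebra_simps power2_eq_square)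
  have im: "(\<lambda>t. ftilde n A (Z + (\<i> * complex_of_real t) \<cdot>\<^sub>m Emat (2*n) p q)) =
      (\<lambda>t. C + (cmod (a + of_real t * (\<i> * v - \<i> * u) + of_real t ^ 2 * A $$ (p,p)))\<^sup>2)"
    by (simp only: perturb) (simp add: algebra_simps power2_eq_square)
  have "egrad (2*n) (ftilde n A) Z $$ (p,q) =
      complex_of_real (2 * Re (cnj a * (v + u))) + \<i> * complex_of_real (2 * Re (cnj a * (\<i> * v - \<i> * u)))"
    unfolding egrad_def using p q
    by (simp add: re im THE_has_real_derivative[OF has_real_derivative_cmod_sq_quadratic])
  also have "\<dots> = 2 * (cnj a * u + a * cnj v)"
    by (simp add: complex_eq_iff algebra_simps)
  finally show ?thesis by (simp add: u_def v_def)
qed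

lemma index_ctrans_mult:
  "Z \<in> carrier_mat m r \<Longrightarrow> M \<in> carrier_mat m c \<Longrightarrow> i < r \<Longrightarrow> j < c \<Longrightarrow>
    (ctrans Z * M) $$ (i,j) = (\<Sum>p<m. cnj (Z $$ (p,i)) * M $$ (p,j))"
  by (simp add: scalar_prod_def atLeast0LessThan)

lemma cinner_mult_col:
  assumes "A \<in> carrier_mat m m" "Z \<in> carrier_mat m m" "j < m"
  shows "cinner (A *\<^sub>v col Z j) (col Z j) = (ctrans Z * (A * Z)) $$ (j,j)"
  using assms by (auto simp: cinner_def scalar_prod_def atLeast0LessThan mult.commute intro!: sum.cong)

lemma Im_diag_ctrans_mult_egrad_ftilde:
  assumes A: "A \<in> carrier_mat (2*n) (2*n)" and Z: "Z \<in> carrier_mat (2*n) (2*n)" and j: "j < 2*n"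
  shows "Im ((ctrans Z * egrad (2*n) (ftilde n A) Z) $$ (j,j)) = 0"
proof -
  define a where "a = cinner (A *\<^sub>v col Z j) (col Z j)"
  have AZ: "A * Z \<in> carrier_mat (2*n) (2*n)" and AhZ: "ctrans A * Z \<in> carrier_mat (2*n) (2*n)"
    using A Z by auto
  have a: "(ctrans Z * (A * Z)) $$ (j,j) = a"
    unfolding a_def using A Z j by (simp add: cinner_mult_col)
  have "ctrans Z * (ctrans A * Z) = ctrans (ctrans Z * (A * Z))"
    using A Z by (simp add: ctrans_mult[of _ "2*n" "2*n" _ "2*n"]
        assoc_mult_mat[OF ctrans_carrier[OF Z] ctrans_carrier[OF A] Z])
  hence cnj_a: "(ctrans Z * (ctrans A * Z)) $$ (j,j) = cnj a"
    using a Z j by simp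
  have "(ctrans Z * egrad (2*n) (ftilde n A) Z) $$ (j,j)
      = (\<Sum>p<2*n. cnj (Z $$ (p,j)) * egrad (2*n) (ftilde n A) Z $$ (p,j))"
    by (rule index_ctrans_mult[OF Z egrad_carrier j j])
  also have "\<dots> = (\<Sum>p<2*n. 2 * (cnj a * (cnj (Z $$ (p,j)) * (A * Z) $$ (p,j))
      + a * (cnj (Z $$ (p,j)) * (ctrans A * Z) $$ (p,j))))"
  proof (intro sum.cong refl)
    fix p assume "p \<in> {..<2*n}"
    hence p: "p < 2*n" by simp
    show "cnj (Z $$ (p,j)) * egrad (2*n) (ftilde n A) Z $$ (p,j) = 2 * (cnj a * (cnj (Z $$ (p,j)) * (A * Z) $$ (p,j))
      + a * (cnj (Z $$ (p,j)) * (ctrans A * Z) $$ (p,j)))"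
      unfolding egrad_ftilde_index[OF A Z p j] a_def by (simp add: algebra_simps)
  qed
  also have "\<dots> = 2 * (cnj a * (\<Sum>p<2*n. cnj (Z $$ (p,j)) * (A * Z) $$ (p,j))
      + a * (\<Sum>p<2*n. cnj (Z $$ (p,j)) * (ctrans A * Z) $$ (p,j)))"
    by (simp add: sum.distrib sum_distrib_left)
  also have "\<dots> = 2 * (cnj a * (ctrans Z * (A * Z)) $$ (j,j) + a * (ctrans Z * (ctrans A * Z)) $$ (j,j))"
    using AZ AhZ Z j by (simp only: index_ctrans_mult)
  finally show ?thesis by (simp add: a cnj_a)
qed

theorem lemma4p2:
  fixes n :: nat and A Z :: "complex mat"
  assumes "hamiltonian n A"
    and "Z \<in> USp n"
  shows "\<exists>X \<in> carrier_mat (2*n) (2*n).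
           rgrad n A Z = Z * X \<and> skew_hermitian X \<and> hamiltonian n X \<and>
           (\<forall>i<2*n. X $$ (i,i) = 0)"
proof -
  have A: "A \<in> carrier_mat (2*n) (2*n)" using assms(1) by (simp add: hamiltonian_def)
  have unitary: "unitary_mat (2*n) Z" using assms(2) by (simp add: USp_def)
  hence Z: "Z \<in> carrier_mat (2*n) (2*n)" by (simp add: unitary_mat_def)
  define W where "W = ctrans Z * egrad (2*n) (ftilde n A) Z"
  have W: "W \<in> carrier_mat (2*n) (2*n)"
    unfolding W_def using mult_carrier_mat[OF ctrans_carrier[OF Z] egrad_carrier] .
  have "rgrad n A Z = Z * skew_ham_proj n W"
    unfolding rgrad_def W_def by (rule orth_proj_tangent_space[OF unitary egrad_carrier])
  moreover have "\<forall>j<2*n. Im (W $$ (j,j)) = 0"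
    unfolding W_def using Im_diag_ctrans_mult_egrad_ftilde[OF A Z] by blast
  hence "\<forall>i<2*n. skew_ham_proj n W $$ (i,i) = 0"
    using skew_ham_proj_diag[OF W] by blast
  ultimately show ?thesis
    using skew_ham_proj_carrier skew_hermitian_skew_ham_proj[OF W] hamiltonian_skew_ham_proj[OF W] by blast
qed

end
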